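(* For real parameters $a>0$, $b\ge 0$, $\alpha>0$, $n>0$, let $s^*=s^*(a,b,\alpha,n)$ denote the unique solution in $(0,n)$ of $$\alpha a n s^{-\alpha-1}-(\alpha+1)a s^{-\alpha}-b=0,$$ which is the unique minimizer of $s\mapsto \frac{a s^{-\alpha}+b}{n-s}$ over $s\in(0,n)$. Then: (i) $s^*$ is nondecreasing in $a$, and strictly increasing in $a$ whenever $b>0$; (ii) $s^*$ is strictly decreasing in $b$; (iii) $s^*$ is strictly increasing in $n$; (iv) if $b=0$, then $s^*/n=\alpha/(\alpha+1)$, independent of $a$ and $n$; (v) the fraction $s^*/n$ is nondecreasing in $a$ (strictly increasing if $b>0$), strictly decreasing in $b$, and nonincreasing in $n$; if $b>0$, then $\lim_{n\to\infty} s^*/n=0$; moreover, if $\alpha<1$, $$0\;\ge\;\frac{\partial}{\partial n}\Big(\frac{s^*}{n}\Big)\;\ge\;-\frac{\alpha}{\alpha+1}\,\frac{b}{a}\,n^{\alpha-1}.$$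
   Context: Monotonicity statements refer to $s^*$ (or $s^*/n$) viewed as a function of one parameter with the others held fixed, within the stated parameter ranges. *)

theory Defs
  imports "HOL-Analysis.Analysis"
begin

definition foc :: "real \<Rightarrow> real \<Rightarrow> real \<Rightarrow> real \<Rightarrow> real \<Rightarrow> real" where
  "foc a b \<alpha> n s = \<alpha> * a * n * s powr (-\<alpha> - 1) - (\<alpha> + 1) * a * s powr (-\<alpha>) - b"

definition obj :: "real \<Rightarrow> real \<Rightarrow> real \<Rightarrow> real \<Rightarrow> real \<Rightarrow> real" where
  "obj a b \<alpha> n s = (a * s powr (-\<alpha>) + b) / (n - s)"

definition sstar :: "real \<Rightarrow> real \<Rightarrow> real \<Rightarrow> real \<Rightarrow> real" where
  "sstar a b \<alpha> n = (THE s. 0 < s \<and> s < n \<and> foc a b \<alpha> n s = 0)"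

end

(*
  Multiplying the first-order condition by s^(\<alpha>+1) turns it into
  \<alpha> a n = (\<alpha>+1) a s + b s^(\<alpha>+1), whose right-hand side is strictly increasing in s.
  Hence s* exists and is unique, and for s > 0 the first-order condition is positive
  exactly when s < s*. Since the condition is affine in a, b and n, each monotonicity
  claim reduces to the sign of one first-order condition at the root of another.
  The substitution s = n t gives s*(a, b, n) = n s*(a, b n^\<alpha>, 1), so s*/n is
  governed by s*(a, -, 1): it decreases in its second argument, tends to 0, and is the
  inverse of t \<mapsto> foc a 0 \<alpha> 1 t, which yields the derivative of s*/n by the
  inverse function theorem.
*)
theory Submission
  imports Defs "HOL-Complex_Analysis.Conformal_Mappings" "HOL-Real_Asymp.Real_Asymp"
begin

definition foc_rhs :: "real \<Rightarrow> real \<Rightarrow> real \<Rightarrow> real \<Rightarrow> real" where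
  "foc_rhs a b \<alpha> s = (\<alpha> + 1) * a * s + b * s powr (\<alpha> + 1)"

lemma strict_mono_on_linear_plus_powr:
  fixes c d p :: real
  assumes "c > 0" "d \<ge> 0" "p > 0"
  shows "strict_mono_on {0..} (\<lambda>s. c * s + d * s powr p)"
proof (rule strict_mono_onI)
  fix x y :: real
  assume "x \<in> {0..}" "y \<in> {0..}" "x < y"
  then have "d * x powr p \<le> d * y powr p"
    using assms by (intro mult_left_mono powr_mono2) auto
  moreover have "c * x < c * y"
    using \<open>x < y\<close> \<open>c > 0\<close> by simp
  ultimately show "c * x + d * x powr p < c * y + d * y powr p"
    by linarith
qed

lemma foc_factor:
  assumes "s > 0"
  shows "foc a b \<alpha> n s = s powr (-\<alpha> - 1) * (\<alpha> * a * n - foc_rhs a b \<alpha> s)"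
proof -
  have "s powr (-\<alpha> - 1) * s = s powr (-\<alpha>)"
    using assms by (simp add: powr_mult_base mult.commute)
  moreover have "s powr (-\<alpha> - 1) * s powr (\<alpha> + 1) = 1"
    using assms by (simp add: powr_add [symmetric])
  ultimately show ?thesis
    unfolding foc_def foc_rhs_def by (simp add: algebra_simps)
qed

lemma strict_mono_on_foc_rhs:
  assumes "\<alpha> > 0" "a > 0" "b \<ge> 0"
  shows "strict_mono_on {0..} (foc_rhs a b \<alpha>)"
  using strict_mono_on_linear_plus_powr [of "(\<alpha> + 1) * a" b "\<alpha> + 1"] assms
  unfolding foc_rhs_def [abs_def] by simp

lemma foc_root_iff:
  assumes "s > 0"
  shows "foc a b \<alpha> n s = 0 \<longleftrightarrow> foc_rhs a b \<alpha> s = \<alpha> * a * n"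
  using assms by (auto simp: foc_factor)

lemma foc_unique_root:
  assumes "\<alpha> > 0" "a > 0" "b \<ge> 0" "n > 0"
  shows "\<exists>!s. 0 < s \<and> s < n \<and> foc a b \<alpha> n s = 0"
proof -
  have "continuous_on {0..n} (foc_rhs a b \<alpha>)"
    unfolding foc_rhs_def [abs_def] using assms
    by (intro continuous_intros continuous_on_powr') auto
  moreover have at_0: "foc_rhs a b \<alpha> 0 < \<alpha> * a * n"
    using assms by (simp add: foc_rhs_def)
  moreover have at_n: "\<alpha> * a * n < foc_rhs a b \<alpha> n"
    using assms by (simp add: foc_rhs_def distrib_right add_pos_nonneg)
  ultimately obtain s where s: "0 \<le> s" "s \<le> n" "foc_rhs a b \<alpha> s = \<alpha> * a * n"
    using IVT' [of "foc_rhs a b \<alpha>" 0 "\<alpha> * a * n" n] assms by auto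
  with at_0 at_n have "s \<noteq> 0" "s \<noteq> n"
    by auto
  with s have root: "0 < s \<and> s < n \<and> foc a b \<alpha> n s = 0"
    by (simp add: foc_root_iff)
  show ?thesis
  proof (rule ex1I [of _ s])
    show "0 < s \<and> s < n \<and> foc a b \<alpha> n s = 0"
      by (fact root)
  next
    fix s' assume "0 < s' \<and> s' < n \<and> foc a b \<alpha> n s' = 0"
    with root show "s' = s"
      using strict_mono_on_eqD [OF strict_mono_on_foc_rhs [OF assms(1-3)], of s' s]
      by (auto simp: foc_root_iff)
  qed
qed

lemma sstar_root:
  assumes "\<alpha> > 0" "a > 0" "b \<ge> 0" "n > 0"
  shows "0 < sstar a b \<alpha> n" "sstar a b \<alpha> n < n" "foc a b \<alpha> n (sstar a b \<alpha> n) = 0"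
  using theI' [OF foc_unique_root [OF assms]] unfolding sstar_def by auto

lemma sstar_eqI:
  assumes "\<alpha> > 0" "a > 0" "b \<ge> 0" "0 < s" "s < n" "foc a b \<alpha> n s = 0"
  shows "sstar a b \<alpha> n = s"
  unfolding sstar_def using assms
  by (intro the1_equality foc_unique_root) auto

lemma foc_rhs_sstar:
  assumes "\<alpha> > 0" "a > 0" "b \<ge> 0" "n > 0"
  shows "foc_rhs a b \<alpha> (sstar a b \<alpha> n) = \<alpha> * a * n"
  using sstar_root [OF assms] by (simp add: foc_root_iff)

lemma foc_pos_iff_less_sstar:
  assumes "\<alpha> > 0" "a > 0" "b \<ge> 0" "n > 0" "s > 0"
  shows "0 < foc a b \<alpha> n s \<longleftrightarrow> s < sstar a b \<alpha> n"
proof -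
  have "0 < foc a b \<alpha> n s \<longleftrightarrow> foc_rhs a b \<alpha> s < foc_rhs a b \<alpha> (sstar a b \<alpha> n)"
    using assms(5) foc_rhs_sstar [OF assms(1-4)] by (simp add: foc_factor zero_less_mult_iff)
  also have "\<dots> \<longleftrightarrow> s < sstar a b \<alpha> n"
    using sstar_root [OF assms(1-4)] assms(5)
    by (intro strict_mono_on_less [OF strict_mono_on_foc_rhs [OF assms(1-3)]]) auto
  finally show ?thesis .
qed

lemma foc_nonneg_iff_le_sstar:
  assumes "\<alpha> > 0" "a > 0" "b \<ge> 0" "n > 0" "s > 0"
  shows "0 \<le> foc a b \<alpha> n s \<longleftrightarrow> s \<le> sstar a b \<alpha> n"
proof -
  have "0 \<le> foc a b \<alpha> n s \<longleftrightarrow> foc_rhs a b \<alpha> s \<le> foc_rhs a b \<alpha> (sstar a b \<alpha> n)"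
    using assms(5) foc_rhs_sstar [OF assms(1-4)] by (simp add: foc_factor zero_le_mult_iff)
  also have "\<dots> \<longleftrightarrow> s \<le> sstar a b \<alpha> n"
    using sstar_root [OF assms(1-4)] assms(5)
    by (intro strict_mono_on_less_eq [OF strict_mono_on_foc_rhs [OF assms(1-3)]]) auto
  finally show ?thesis .
qed

lemma obj_has_real_derivative:
  assumes "0 < s" "s \<noteq> n"
  shows "(obj a b \<alpha> n has_real_derivative - foc a b \<alpha> n s / (n - s)\<^sup>2) (at s)"
proof -
  have "((\<lambda>s. (a * s powr (-\<alpha>) + b) / (n - s)) has_real_derivative
      (a * (-\<alpha> * s powr (-\<alpha> - 1)) * (n - s) + (a * s powr (-\<alpha>) + b)) / (n - s)\<^sup>2) (at s)"
    using assms by (auto intro!: derivative_eq_intros simp: power2_eq_square)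
  moreover have "s powr (-\<alpha> - 1) * s = s powr (-\<alpha>)"
    using assms by (simp add: powr_mult_base mult.commute)
  then have "a * (-\<alpha> * s powr (-\<alpha> - 1)) * (n - s) + (a * s powr (-\<alpha>) + b) = - foc a b \<alpha> n s"
    unfolding foc_def by (simp add: algebra_simps)
  ultimately show ?thesis
    unfolding obj_def [abs_def] by simp
qed

lemma obj_strict_minimum_at_sstar:
  assumes "\<alpha> > 0" "a > 0" "b \<ge> 0" "0 < s" "s < n" "s \<noteq> sstar a b \<alpha> n"
  shows "obj a b \<alpha> n (sstar a b \<alpha> n) < obj a b \<alpha> n s"
proof -
  have n: "n > 0" and sstar: "0 < sstar a b \<alpha> n" "sstar a b \<alpha> n < n"
    using assms sstar_root [of \<alpha> a b n] by auto
  have deriv: "(obj a b \<alpha> n has_real_derivative - foc a b \<alpha> n x / (n - x)\<^sup>2) (at x)"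
    if "0 < x" "x < n" for x
    using that by (intro obj_has_real_derivative) auto
  have cont: "continuous_on {x..y} (obj a b \<alpha> n)" if "0 < x" "y < n" for x y
    using that by (intro continuous_at_imp_continuous_on ballI DERIV_isCont [OF deriv]) auto
  show ?thesis
  proof (cases "s < sstar a b \<alpha> n")
    case True
    show ?thesis
    proof (rule DERIV_neg_imp_decreasing_open [OF True _ cont])
      fix x assume "s < x" "x < sstar a b \<alpha> n"
      with assms n sstar have "0 < x" "x < n" "0 < foc a b \<alpha> n x"
        using foc_pos_iff_less_sstar [of \<alpha> a b n x] by auto
      moreover from this have "- foc a b \<alpha> n x / (n - x)\<^sup>2 < 0"
        by simp
      ultimately show "\<exists>y. DERIV (obj a b \<alpha> n) x :> y \<and> y < 0"
        using deriv by blast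
    qed (use assms sstar in auto)
  next
    case False
    with assms have less: "sstar a b \<alpha> n < s" by auto
    show ?thesis
    proof (rule DERIV_pos_imp_increasing_open [OF less _ cont])
      fix x assume "sstar a b \<alpha> n < x" "x < s"
      with assms n sstar have "0 < x" "x < n" "foc a b \<alpha> n x < 0"
        using foc_nonneg_iff_le_sstar [of \<alpha> a b n x] by auto
      moreover from this have "- foc a b \<alpha> n x / (n - x)\<^sup>2 > 0"
        by (simp add: divide_neg_pos)
      ultimately show "\<exists>y. DERIV (obj a b \<alpha> n) x :> y \<and> y > 0"
        using deriv by blast
    qed (use assms sstar in auto)
  qed
qed

lemma sstar_strict_antimono_b:
  assumes "\<alpha> > 0" "a > 0" "n > 0" "0 \<le> b1" "b1 < b2"
  shows "sstar a b2 \<alpha> n < sstar a b1 \<alpha> n"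
proof -
  define s where "s = sstar a b2 \<alpha> n"
  have "0 < s" "foc a b2 \<alpha> n s = 0"
    using sstar_root [of \<alpha> a b2 n] assms unfolding s_def by auto
  moreover have "foc a b1 \<alpha> n s = foc a b2 \<alpha> n s + (b2 - b1)"
    by (simp add: foc_def)
  ultimately show ?thesis
    using foc_pos_iff_less_sstar [of \<alpha> a b1 n s] assms unfolding s_def by auto
qed

lemma sstar_antimono_b:
  assumes "\<alpha> > 0" "a > 0" "n > 0" "0 \<le> b1" "b1 \<le> b2"
  shows "sstar a b2 \<alpha> n \<le> sstar a b1 \<alpha> n"
  using sstar_strict_antimono_b [OF assms(1-4), of b2] assms(5)
  by (cases "b1 = b2") auto

lemma sstar_mono_a:
  assumes "\<alpha> > 0" "0 < a1" "a1 \<le> a2" "b \<ge> 0" "n > 0"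
  shows "sstar a1 b \<alpha> n \<le> sstar a2 b \<alpha> n"
    and "b > 0 \<Longrightarrow> a1 < a2 \<Longrightarrow> sstar a1 b \<alpha> n < sstar a2 b \<alpha> n"
proof -
  define s where "s = sstar a1 b \<alpha> n"
  have s: "0 < s" "foc a1 b \<alpha> n s = 0"
    using sstar_root [of \<alpha> a1 b n] assms unfolding s_def by auto
  have "a1 * foc a2 b \<alpha> n s = (a2 - a1) * b + a2 * foc a1 b \<alpha> n s"
    by (simp add: foc_def algebra_simps)
  with s have scaled: "a1 * foc a2 b \<alpha> n s = (a2 - a1) * b"
    by simp
  with assms have "0 \<le> a1 * foc a2 b \<alpha> n s"
    by simp
  then have "0 \<le> foc a2 b \<alpha> n s"
    using \<open>0 < a1\<close> by (simp add: zero_le_mult_iff)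
  with assms s show "sstar a1 b \<alpha> n \<le> sstar a2 b \<alpha> n"
    using foc_nonneg_iff_le_sstar [of \<alpha> a2 b n s] unfolding s_def by auto
  assume "b > 0" "a1 < a2"
  with scaled have "0 < a1 * foc a2 b \<alpha> n s"
    by simp
  then have "0 < foc a2 b \<alpha> n s"
    using \<open>0 < a1\<close> by (simp add: zero_less_mult_iff)
  with assms s show "sstar a1 b \<alpha> n < sstar a2 b \<alpha> n"
    using foc_pos_iff_less_sstar [of \<alpha> a2 b n s] unfolding s_def by auto
qed

lemma sstar_strict_mono_n:
  assumes "\<alpha> > 0" "a > 0" "b \<ge> 0" "0 < n1" "n1 < n2"
  shows "sstar a b \<alpha> n1 < sstar a b \<alpha> n2"
proof -
  define s where "s = sstar a b \<alpha> n1"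
  have "0 < s" "foc a b \<alpha> n1 s = 0"
    using sstar_root [of \<alpha> a b n1] assms unfolding s_def by auto
  moreover have "foc a b \<alpha> n2 s = foc a b \<alpha> n1 s + \<alpha> * a * (n2 - n1) * s powr (-\<alpha> - 1)"
    by (simp add: foc_def algebra_simps)
  ultimately show ?thesis
    using foc_pos_iff_less_sstar [of \<alpha> a b n2 s] assms unfolding s_def by auto
qed

lemma foc_scale:
  assumes "n > 0" "t > 0"
  shows "foc a b \<alpha> n (n * t) = n powr (-\<alpha>) * foc a (b * n powr \<alpha>) \<alpha> 1 t"
proof -
  have "n * (n * t) powr (-\<alpha> - 1) = n powr (-\<alpha>) * t powr (-\<alpha> - 1)"
    using assms by (simp add: powr_mult powr_mult_base mult_ac)
  moreover have "n powr (-\<alpha>) * n powr \<alpha> = 1"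
    using assms by (simp add: powr_add [symmetric])
  ultimately show ?thesis
    using assms by (simp add: foc_def powr_mult algebra_simps)
qed

lemma sstar_scale:
  assumes "\<alpha> > 0" "a > 0" "b \<ge> 0" "n > 0"
  shows "sstar a b \<alpha> n = n * sstar a (b * n powr \<alpha>) \<alpha> 1"
proof (rule sstar_eqI)
  have "0 < sstar a (b * n powr \<alpha>) \<alpha> 1" "sstar a (b * n powr \<alpha>) \<alpha> 1 < 1"
    "foc a (b * n powr \<alpha>) \<alpha> 1 (sstar a (b * n powr \<alpha>) \<alpha> 1) = 0"
    using sstar_root [of \<alpha> a "b * n powr \<alpha>" 1] assms by auto
  then show "0 < n * sstar a (b * n powr \<alpha>) \<alpha> 1" "n * sstar a (b * n powr \<alpha>) \<alpha> 1 < n"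
    "foc a b \<alpha> n (n * sstar a (b * n powr \<alpha>) \<alpha> 1) = 0"
    using assms by (simp_all add: foc_scale)
qed (use assms in auto)

lemma sstar_b0:
  assumes "\<alpha> > 0" "a > 0" "n > 0"
  shows "sstar a 0 \<alpha> n = \<alpha> / (\<alpha> + 1) * n"
  using assms by (intro sstar_eqI) (auto simp: foc_root_iff foc_rhs_def field_simps)

lemma sstar_ratio_antimono_n:
  assumes "\<alpha> > 0" "a > 0" "b \<ge> 0" "0 < n1" "n1 \<le> n2"
  shows "sstar a b \<alpha> n2 / n2 \<le> sstar a b \<alpha> n1 / n1"
proof -
  have "b * n1 powr \<alpha> \<le> b * n2 powr \<alpha>"
    using assms by (intro mult_left_mono powr_mono2) auto
  then have "sstar a (b * n2 powr \<alpha>) \<alpha> 1 \<le> sstar a (b * n1 powr \<alpha>) \<alpha> 1"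
    using assms by (intro sstar_antimono_b) auto
  then show ?thesis
    using sstar_scale [of \<alpha> a b n1] sstar_scale [of \<alpha> a b n2] assms by simp
qed

lemma sstar_unit_powr_le:
  assumes "\<alpha> > 0" "a > 0" "b > 0"
  shows "sstar a b \<alpha> 1 powr (\<alpha> + 1) \<le> \<alpha> * a / b"
proof -
  define t where "t = sstar a b \<alpha> 1"
  have "0 < t" "foc_rhs a b \<alpha> t = \<alpha> * a"
    using sstar_root [of \<alpha> a b 1] foc_rhs_sstar [of \<alpha> a b 1] assms unfolding t_def by auto
  moreover from this have "0 \<le> (\<alpha> + 1) * a * t"
    using assms by simp
  ultimately have "b * t powr (\<alpha> + 1) \<le> \<alpha> * a"
    unfolding foc_rhs_def by linarith
  then show ?thesis
    using assms unfolding t_def by (simp add: field_simps)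
qed

lemma tendsto_sstar_unit_at_top:
  assumes "\<alpha> > 0" "a > 0"
  shows "((\<lambda>b. sstar a b \<alpha> 1) \<longlongrightarrow> 0) at_top"
proof (rule tendsto_sandwich)
  show "\<forall>\<^sub>F b in at_top. 0 \<le> sstar a b \<alpha> 1"
    using eventually_ge_at_top [of 0]
    by eventually_elim (use sstar_root [of \<alpha> a _ 1] assms in \<open>auto intro: less_imp_le\<close>)
  show "\<forall>\<^sub>F b in at_top. sstar a b \<alpha> 1 \<le> (\<alpha> * a / b) powr (1 / (\<alpha> + 1))"
    using eventually_gt_at_top [of 0]
  proof eventually_elim
    case (elim b)
    have "sstar a b \<alpha> 1 = (sstar a b \<alpha> 1 powr (\<alpha> + 1)) powr (1 / (\<alpha> + 1))"
      using sstar_root [of \<alpha> a b 1] assms elim by (simp add: powr_powr)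
    also have "\<dots> \<le> (\<alpha> * a / b) powr (1 / (\<alpha> + 1))"
      using sstar_unit_powr_le [of \<alpha> a b] assms elim by (intro powr_mono2) auto
    finally show ?case .
  qed
  have "((\<lambda>b. \<alpha> * a / b) \<longlongrightarrow> 0) at_top"
    by (intro tendsto_divide_0 [OF tendsto_const] filterlim_at_top_imp_at_infinity filterlim_ident)
  moreover have "\<forall>\<^sub>F b in at_top. 0 \<le> \<alpha> * a / b"
    using eventually_ge_at_top [of 0] by eventually_elim (use assms in simp)
  ultimately show "((\<lambda>b. (\<alpha> * a / b) powr (1 / (\<alpha> + 1))) \<longlongrightarrow> 0) at_top"
    using assms by (intro tendsto_zero_powrI [OF _ tendsto_const]) auto
qed simp

lemma tendsto_sstar_ratio_at_top:
  assumes "\<alpha> > 0" "a > 0" "b > 0"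
  shows "((\<lambda>n. sstar a b \<alpha> n / n) \<longlongrightarrow> 0) at_top"
proof -
  have "filterlim (\<lambda>n. b * n powr \<alpha>) at_top at_top"
    using assms by (intro filterlim_tendsto_pos_mult_at_top [OF tendsto_const] real_powr_at_top) auto
  then have "((\<lambda>n. sstar a (b * n powr \<alpha>) \<alpha> 1) \<longlongrightarrow> 0) at_top"
    by (rule filterlim_compose [OF tendsto_sstar_unit_at_top [OF assms(1,2)]])
  moreover have "\<forall>\<^sub>F n in at_top. sstar a (b * n powr \<alpha>) \<alpha> 1 = sstar a b \<alpha> n / n"
    using eventually_gt_at_top [of 0]
    by eventually_elim (use sstar_scale [of \<alpha> a b] assms in auto)
  ultimately show ?thesis
    by (rule Lim_transform_eventually)
qed

lemma foc_has_real_derivative: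
  assumes "s > 0"
  shows "(foc a b \<alpha> n has_real_derivative - \<alpha> * (\<alpha> + 1) * a * (n - s) / s powr (\<alpha> + 2)) (at s)"
proof -
  have "s powr (-\<alpha> - 1 - 1) = s powr (- (\<alpha> + 2))"
    by (intro arg_cong [of _ _ "(powr) s"]) simp
  then have pow2: "s powr (-\<alpha> - 1 - 1) = 1 / s powr (\<alpha> + 2)"
    by (simp only: powr_minus_divide)
  have "s powr (-\<alpha> - 1) = s powr (1 - (\<alpha> + 2))"
    by (intro arg_cong [of _ _ "(powr) s"]) simp
  then have pow1: "s powr (-\<alpha> - 1) = s / s powr (\<alpha> + 2)"
    using assms by (simp only: powr_diff powr_one_gt_zero_iff powr_one)
  have "(foc a b \<alpha> n has_real_derivative
      \<alpha> * a * n * ((-\<alpha> - 1) * s powr (-\<alpha> - 1 - 1)) - (\<alpha> + 1) * a * (-\<alpha> * s powr (-\<alpha> - 1))) (at s)"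
    unfolding foc_def [abs_def] using assms by (auto intro!: derivative_eq_intros)
  then show ?thesis
    unfolding pow1 pow2 by (rule DERIV_cong) (use assms in \<open>simp add: field_simps\<close>)
qed

(* On (0, \<alpha>/(\<alpha>+1)) the map t \<mapsto> foc a 0 \<alpha> 1 t is positive and inverted by b \<mapsto> s*(a, b, 1). *)
lemma sstar_unit_has_real_derivative:
  assumes "\<alpha> > 0" "a > 0" "b > 0"
  defines "t \<equiv> sstar a b \<alpha> 1"
  shows "((\<lambda>c. sstar a c \<alpha> 1) has_real_derivative
      - (t powr (\<alpha> + 2) / (\<alpha> * (\<alpha> + 1) * a * (1 - t)))) (at b)"
proof -
  let ?S = "{0<..<\<alpha> / (\<alpha> + 1)}"
  have "\<alpha> / (\<alpha> + 1) < 1"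
    using assms by simp
  have t: "0 < t" "t < \<alpha> / (\<alpha> + 1)" "foc a b \<alpha> 1 t = 0"
    using sstar_root [of \<alpha> a b 1] sstar_strict_antimono_b [of \<alpha> a 1 0 b] sstar_b0 [of \<alpha> a 1] assms
    unfolding t_def by auto
  with \<open>\<alpha> / (\<alpha> + 1) < 1\<close> have "t < 1"
    by linarith
  have inverse: "sstar a (foc a 0 \<alpha> 1 z) \<alpha> 1 = z" if "z \<in> ?S" for z
  proof (rule sstar_eqI)
    have "sstar a 0 \<alpha> 1 = \<alpha> / (\<alpha> + 1)"
      using sstar_b0 [of \<alpha> a 1] assms by simp
    with that assms show "0 \<le> foc a 0 \<alpha> 1 z"
      using foc_pos_iff_less_sstar [of \<alpha> a 0 1 z] by auto
    show "z < 1"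
      using that \<open>\<alpha> / (\<alpha> + 1) < 1\<close> by auto
  qed (use that assms in \<open>auto simp: foc_def\<close>)
  have "((\<lambda>c. sstar a c \<alpha> 1) has_real_derivative
      inverse (- \<alpha> * (\<alpha> + 1) * a * (1 - t) / t powr (\<alpha> + 2))) (at b)"
  proof (rule has_field_derivative_inverse_strong_x [where S = ?S])
    show "DERIV (foc a 0 \<alpha> 1) (sstar a b \<alpha> 1) :> - \<alpha> * (\<alpha> + 1) * a * (1 - t) / t powr (\<alpha> + 2)"
      using foc_has_real_derivative [of t a 0 \<alpha> 1] t unfolding t_def by simp
    show "continuous_on ?S (foc a 0 \<alpha> 1)"
      by (intro continuous_at_imp_continuous_on ballI DERIV_isCont [OF foc_has_real_derivative]) auto
    show "foc a 0 \<alpha> 1 (sstar a b \<alpha> 1) = b"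
      using t unfolding t_def by (simp add: foc_def)
  qed (use t \<open>t < 1\<close> assms inverse in \<open>auto simp: t_def\<close>)
  moreover have "inverse (- \<alpha> * (\<alpha> + 1) * a * (1 - t) / t powr (\<alpha> + 2))
      = - (t powr (\<alpha> + 2) / (\<alpha> * (\<alpha> + 1) * a * (1 - t)))"
    by simp
  ultimately show ?thesis
    by simp
qed

lemma sstar_ratio_has_real_derivative:
  assumes "\<alpha> > 0" "a > 0" "b \<ge> 0" "n > 0"
  defines "t \<equiv> sstar a b \<alpha> n / n"
  shows "((\<lambda>m. sstar a b \<alpha> m / m) has_real_derivative
      - (b / a) * n powr (\<alpha> - 1) * (t powr (\<alpha> + 2) / ((\<alpha> + 1) * (1 - t)))) (at n)"
proof (cases "b = 0")
  case True
  have "((\<lambda>m. sstar a b \<alpha> m / m) has_real_derivative 0) (at n)"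
  proof (rule has_field_derivative_transform_within_open [OF DERIV_const, where S = "{0<..}"])
    show "\<alpha> / (\<alpha> + 1) = sstar a b \<alpha> m / m" if "m \<in> {0<..}" for m
      using that sstar_b0 [of \<alpha> a m] assms True by simp
  qed (use assms in auto)
  with True show ?thesis
    by simp
next
  case False
  with assms have "b > 0"
    by simp
  have scale: "sstar a b \<alpha> m / m = sstar a (b * m powr \<alpha>) \<alpha> 1" if "m > 0" for m
    using sstar_scale [of \<alpha> a b m] that assms by simp
  have t: "t = sstar a (b * n powr \<alpha>) \<alpha> 1"
    using scale [of n] assms unfolding t_def by simp
  have "t < 1"
    using sstar_root [of \<alpha> a b n] assms unfolding t_def by simp
  have "((\<lambda>m. sstar a (b * m powr \<alpha>) \<alpha> 1) has_real_derivative
      - (t powr (\<alpha> + 2) / (\<alpha> * (\<alpha> + 1) * a * (1 - t))) * (b * (\<alpha> * n powr (\<alpha> - 1)))) (at n)"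
    using DERIV_chain2 [OF sstar_unit_has_real_derivative [of \<alpha> a "b * n powr \<alpha>"]
        DERIV_cmult [OF has_real_derivative_powr [OF assms(4)], of b \<alpha>]] \<open>b > 0\<close> assms t(1)
    by simp
  then have "((\<lambda>m. sstar a b \<alpha> m / m) has_real_derivative
      - (t powr (\<alpha> + 2) / (\<alpha> * (\<alpha> + 1) * a * (1 - t))) * (b * (\<alpha> * n powr (\<alpha> - 1)))) (at n)"
    by (rule has_field_derivative_transform_within_open [where S = "{0<..}"]) (use assms scale in auto)
  moreover have "\<alpha> + 1 \<noteq> 0" "1 - t \<noteq> 0"
    using assms(1) \<open>t < 1\<close> by auto
  ultimately show ?thesis
    by (elim DERIV_cong) (use assms(1,2) in \<open>simp add: divide_simps mult_ac\<close>)
qed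

lemma powr_div_one_minus_le:
  fixes \<alpha> t :: real
  assumes "\<alpha> > 0" "0 < t" "t \<le> \<alpha> / (\<alpha> + 1)"
  shows "t powr (\<alpha> + 2) / ((\<alpha> + 1) * (1 - t)) \<le> \<alpha> / (\<alpha> + 1)"
proof -
  have "\<alpha> / (\<alpha> + 1) < 1" "t \<le> \<alpha> * (1 - t)"
    using assms by (simp_all add: field_simps)
  with assms have "t < 1"
    by linarith
  have "t powr (\<alpha> + 2) = t * t powr (\<alpha> + 1)"
    using assms by (simp add: powr_mult_base add_ac)
  also have "\<dots> \<le> t"
    using assms \<open>t < 1\<close> powr_le1 [of "\<alpha> + 1" t] by (simp add: mult_left_le)
  also have "\<dots> \<le> \<alpha> * (1 - t)"
    by fact
  finally have "t powr (\<alpha> + 2) / ((\<alpha> + 1) * (1 - t)) \<le> \<alpha> * (1 - t) / ((\<alpha> + 1) * (1 - t))"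
    using assms \<open>t < 1\<close> by (intro divide_right_mono) auto
  also have "\<dots> = \<alpha> / (\<alpha> + 1)"
    using \<open>t < 1\<close> by simp
  finally show ?thesis .
qed

lemma sstar_ratio_derivative_bounds:
  assumes "\<alpha> > 0" "a > 0" "b \<ge> 0" "n > 0"
  shows "\<exists>D. ((\<lambda>m. sstar a b \<alpha> m / m) has_real_derivative D) (at n) \<and>
      D \<le> 0 \<and> D \<ge> - (\<alpha> / (\<alpha> + 1)) * (b / a) * n powr (\<alpha> - 1)"
proof -
  define t where "t = sstar a b \<alpha> n / n"
  define c where "c = (b / a) * n powr (\<alpha> - 1)"
  define x where "x = t powr (\<alpha> + 2) / ((\<alpha> + 1) * (1 - t))"
  have t: "0 < t" "t < 1" "t \<le> \<alpha> / (\<alpha> + 1)"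
    using sstar_root [of \<alpha> a b n] sstar_antimono_b [of \<alpha> a n 0 b] sstar_b0 [of \<alpha> a n] assms
    unfolding t_def by (auto simp: field_simps)
  then have "0 \<le> x"
    using assms unfolding x_def by (intro divide_nonneg_pos) auto
  moreover have "x \<le> \<alpha> / (\<alpha> + 1)"
    unfolding x_def using powr_div_one_minus_le [OF assms(1) t(1,3)] .
  moreover have "0 \<le> c"
    using assms unfolding c_def by simp
  ultimately have "- c * x \<le> 0" "c * x \<le> c * (\<alpha> / (\<alpha> + 1))"
    by (simp, intro mult_left_mono)
  moreover have "((\<lambda>m. sstar a b \<alpha> m / m) has_real_derivative - c * x) (at n)"
    using sstar_ratio_has_real_derivative [OF assms] unfolding c_def x_def t_def by simp
  moreover have "- (\<alpha> / (\<alpha> + 1)) * (b / a) * n powr (\<alpha> - 1) = - (c * (\<alpha> / (\<alpha> + 1)))"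
    unfolding c_def by (simp add: mult_ac)
  ultimately show ?thesis
    by (intro exI [of _ "- c * x"]) auto
qed

theorem proposition1:
  fixes \<alpha> :: real
  assumes "\<alpha> > 0"
  shows
   "(\<forall>a b n. a > 0 \<and> b \<ge> 0 \<and> n > 0 \<longrightarrow>
        (\<exists>!s. 0 < s \<and> s < n \<and> foc a b \<alpha> n s = 0) \<and>
        0 < sstar a b \<alpha> n \<and> sstar a b \<alpha> n < n \<and> foc a b \<alpha> n (sstar a b \<alpha> n) = 0 \<and>
        (\<forall>s. 0 < s \<and> s < n \<and> s \<noteq> sstar a b \<alpha> n \<longrightarrow>
              obj a b \<alpha> n (sstar a b \<alpha> n) < obj a b \<alpha> n s))
  \<and> (\<forall>b n. b \<ge> 0 \<and> n > 0 \<longrightarrow> mono_on {0<..} (\<lambda>a. sstar a b \<alpha> n))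
  \<and> (\<forall>b n. b > 0 \<and> n > 0 \<longrightarrow> strict_mono_on {0<..} (\<lambda>a. sstar a b \<alpha> n))
  \<and> (\<forall>a n b1 b2. a > 0 \<and> n > 0 \<and> 0 \<le> b1 \<and> b1 < b2 \<longrightarrow> sstar a b2 \<alpha> n < sstar a b1 \<alpha> n)
  \<and> (\<forall>a b. a > 0 \<and> b \<ge> 0 \<longrightarrow> strict_mono_on {0<..} (\<lambda>n. sstar a b \<alpha> n))
  \<and> (\<forall>a n. a > 0 \<and> n > 0 \<longrightarrow> sstar a 0 \<alpha> n / n = \<alpha> / (\<alpha> + 1))
  \<and> (\<forall>b n. b \<ge> 0 \<and> n > 0 \<longrightarrow> mono_on {0<..} (\<lambda>a. sstar a b \<alpha> n / n))
  \<and> (\<forall>b n. b > 0 \<and> n > 0 \<longrightarrow> strict_mono_on {0<..} (\<lambda>a. sstar a b \<alpha> n / n))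
  \<and> (\<forall>a n b1 b2. a > 0 \<and> n > 0 \<and> 0 \<le> b1 \<and> b1 < b2 \<longrightarrow>
          sstar a b2 \<alpha> n / n < sstar a b1 \<alpha> n / n)
  \<and> (\<forall>a b n1 n2. a > 0 \<and> b \<ge> 0 \<and> 0 < n1 \<and> n1 \<le> n2 \<longrightarrow>
          sstar a b \<alpha> n2 / n2 \<le> sstar a b \<alpha> n1 / n1)
  \<and> (\<forall>a b. a > 0 \<and> b > 0 \<longrightarrow> ((\<lambda>n. sstar a b \<alpha> n / n) \<longlongrightarrow> 0) at_top)
  \<and> (\<forall>a b n. a > 0 \<and> b \<ge> 0 \<and> n > 0 \<and> \<alpha> < 1 \<longrightarrow>
          (\<exists>D. ((\<lambda>m. sstar a b \<alpha> m / m) has_real_derivative D) (at n) \<and>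
               D \<le> 0 \<and> D \<ge> - (\<alpha> / (\<alpha> + 1)) * (b / a) * n powr (\<alpha> - 1)))"
  \<comment> \<open>The derivative bounds hold for every \<alpha> > 0.\<close>
  using foc_unique_root [OF assms] sstar_root [OF assms] obj_strict_minimum_at_sstar [OF assms]
    sstar_mono_a [OF assms] sstar_strict_antimono_b [OF assms] sstar_strict_mono_n [OF assms]
    sstar_b0 [OF assms] sstar_ratio_antimono_n [OF assms] tendsto_sstar_ratio_at_top [OF assms]
    sstar_ratio_derivative_bounds [OF assms]
  by (intro conjI allI impI) (auto intro!: mono_onI strict_mono_onI divide_right_mono divide_strict_right_mono)

end
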